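(* Let $K$ be a division ring, $R=K[t;\sigma,\delta]$, and let $f,f',g\in R$ be such that $h+Rf'\mapsto hg+Rf$ is a well-defined isomorphism of left $R$-modules $R/Rf'\to R/Rf$. Then $g(x)\neq0$ for every $x\in V(f)$, and $V(f')=\{\phi_g(x)\mid x\in V(f)\}$.
   Context: $K$ is a division ring, $\sigma$ a ring endomorphism of $K$, $\delta$ a $\sigma$-derivation ($\delta$ additive, $\delta(ab)=\sigma(a)\delta(b)+\delta(a)b$); $R=K[t;\sigma,\delta]$ is the Ore extension with $ta=\sigma(a)t+\delta(a)$. For $h\in R$ and $x\in K$, $h(x)$ is the unique element of $K$ with $h-h(x)\in R(t-x)$, and $V(h)=\{x\in K\mid h(x)=0\}$ is the set of right roots of $h$. For $0\ne y\in K$, $x^y:=\sigma(y)xy^{-1}+\delta(y)y^{-1}$, and for $x\notin V(g)$, $\phi_g(x):=x^{g(x)}$. *)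

theory Defs
  imports "HOL-Computational_Algebra.Polynomial"
begin

text \<open>Elements of the Ore extension R = K[t; sigma, delta] are represented by their
  left coefficient sequences: the polynomial p represents the sum over i of (coeff p i) t^i.\<close>

definition ring_endo :: "('a::division_ring \<Rightarrow> 'a) \<Rightarrow> bool" where
  "ring_endo \<sigma> \<longleftrightarrow> (\<forall>a b. \<sigma> (a + b) = \<sigma> a + \<sigma> b) \<and> (\<forall>a b. \<sigma> (a * b) = \<sigma> a * \<sigma> b) \<and> \<sigma> 1 = 1"

definition sigma_derivation :: "('a::division_ring \<Rightarrow> 'a) \<Rightarrow> ('a \<Rightarrow> 'a) \<Rightarrow> bool" where
  "sigma_derivation \<sigma> \<delta> \<longleftrightarrow> (\<forall>a b. \<delta> (a + b) = \<delta> a + \<delta> b) \<and>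
      (\<forall>a b. \<delta> (a * b) = \<sigma> a * \<delta> b + \<delta> a * b)"

text \<open>Left multiplication by t: t * (sum a_i t^i) = sum (sigma(a_i) t^(i+1) + delta(a_i) t^i).\<close>
definition ore_tmul :: "('a::division_ring \<Rightarrow> 'a) \<Rightarrow> ('a \<Rightarrow> 'a) \<Rightarrow> 'a poly \<Rightarrow> 'a poly" where
  "ore_tmul \<sigma> \<delta> q = pCons 0 (map_poly \<sigma> q) + map_poly \<delta> q"

definition ore_lscale :: "'a::division_ring \<Rightarrow> 'a poly \<Rightarrow> 'a poly" where
  "ore_lscale a q = map_poly (\<lambda>c. a * c) q"

definition ore_mult :: "('a::division_ring \<Rightarrow> 'a) \<Rightarrow> ('a \<Rightarrow> 'a) \<Rightarrow> 'a poly \<Rightarrow> 'a poly \<Rightarrow> 'a poly" where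
  "ore_mult \<sigma> \<delta> p q = (\<Sum>i\<le>degree p. ore_lscale (coeff p i) ((ore_tmul \<sigma> \<delta> ^^ i) q))"

definition left_ideal :: "('a::division_ring \<Rightarrow> 'a) \<Rightarrow> ('a \<Rightarrow> 'a) \<Rightarrow> 'a poly \<Rightarrow> 'a poly set" where
  "left_ideal \<sigma> \<delta> h = {ore_mult \<sigma> \<delta> r h | r. True}"

definition coset :: "'a::division_ring poly \<Rightarrow> 'a poly set \<Rightarrow> 'a poly set" where
  "coset h I = {h + r | r. r \<in> I}"

definition ore_eval :: "('a::division_ring \<Rightarrow> 'a) \<Rightarrow> ('a \<Rightarrow> 'a) \<Rightarrow> 'a poly \<Rightarrow> 'a \<Rightarrow> 'a" where
  "ore_eval \<sigma> \<delta> h x = (THE y. h - [:y:] \<in> left_ideal \<sigma> \<delta> [:- x, 1:])"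

definition right_roots :: "('a::division_ring \<Rightarrow> 'a) \<Rightarrow> ('a \<Rightarrow> 'a) \<Rightarrow> 'a poly \<Rightarrow> 'a set" where
  "right_roots \<sigma> \<delta> h = {x. ore_eval \<sigma> \<delta> h x = 0}"

definition ore_conj :: "('a::division_ring \<Rightarrow> 'a) \<Rightarrow> ('a \<Rightarrow> 'a) \<Rightarrow> 'a \<Rightarrow> 'a \<Rightarrow> 'a" where
  "ore_conj \<sigma> \<delta> x y = \<sigma> y * x * inverse y + \<delta> y * inverse y"

definition ore_phi :: "('a::division_ring \<Rightarrow> 'a) \<Rightarrow> ('a \<Rightarrow> 'a) \<Rightarrow> 'a poly \<Rightarrow> 'a \<Rightarrow> 'a" where
  "ore_phi \<sigma> \<delta> g x = ore_conj \<sigma> \<delta> x (ore_eval \<sigma> \<delta> g x)"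

text \<open>h + R f' \<mapsto> h g + R f is a well-defined bijection R/Rf' \<rightarrow> R/Rf
  (left R-linearity is then automatic, as it is induced by right multiplication by g).\<close>
definition induced_iso :: "('a::division_ring \<Rightarrow> 'a) \<Rightarrow> ('a \<Rightarrow> 'a) \<Rightarrow> 'a poly \<Rightarrow> 'a poly \<Rightarrow> 'a poly \<Rightarrow> bool" where
  "induced_iso \<sigma> \<delta> f f' g \<longleftrightarrow>
     (\<forall>h1 h2. coset h1 (left_ideal \<sigma> \<delta> f') = coset h2 (left_ideal \<sigma> \<delta> f') \<longrightarrow>
        coset (ore_mult \<sigma> \<delta> h1 g) (left_ideal \<sigma> \<delta> f) = coset (ore_mult \<sigma> \<delta> h2 g) (left_ideal \<sigma> \<delta> f)) \<and>
     (\<forall>h1 h2. coset (ore_mult \<sigma> \<delta> h1 g) (left_ideal \<sigma> \<delta> f) = coset (ore_mult \<sigma> \<delta> h2 g) (left_ideal \<sigma> \<delta> f) \<longrightarrow>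
        coset h1 (left_ideal \<sigma> \<delta> f') = coset h2 (left_ideal \<sigma> \<delta> f')) \<and>
     (\<forall>k. \<exists>h. coset (ore_mult \<sigma> \<delta> h g) (left_ideal \<sigma> \<delta> f) = coset k (left_ideal \<sigma> \<delta> f))"

end

theory Submission imports Defs begin

(* Everything rests on the product formula for right evaluation in
   R = K[t; sigma, delta]:  if g(x) = c then (h g)(x) = 0 when c = 0, and
   (h g)(x) = h(x^c) c when c <> 0.  It follows from the identity
   (t - x^c) c = sigma(c) (t - x), which shows that t - x^c times g is in R(t - x).
   For the corollary, choose h0 with h0 g = 1 mod Rf (surjectivity of the map).
   At a root x of f, Rf \<subseteq> R(t - x), so (h0 g)(x) = 1 forces g(x) <> 0, and
   f' g \<in> Rf gives 0 = (f' g)(x) = f'(phi_g x) g(x).  Conversely, for a root y of f'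
   injectivity gives g h0 = 1 and f h0 = 0 mod Rf' \<subseteq> R(t - y); with c' = h0(y),
   the product formula yields f(y^c') = 0 and g(y^c') c' = 1, whence
   phi_g(y^c') = y^(g(y^c') c') = y. *)

locale ore =
  fixes \<sigma> \<delta> :: "'a::division_ring \<Rightarrow> 'a"
  assumes endo: "ring_endo \<sigma>" and deriv: "sigma_derivation \<sigma> \<delta>"
begin

abbreviation T where "T \<equiv> ore_tmul \<sigma> \<delta>"
abbreviation L where "L \<equiv> ore_lscale"
abbreviation omult (infixl "\<star>" 70) where "p \<star> q \<equiv> ore_mult \<sigma> \<delta> p q"
abbreviation LI where "LI \<equiv> left_ideal \<sigma> \<delta>"
abbreviation ev where "ev \<equiv> ore_eval \<sigma> \<delta>"
abbreviation conj where "conj \<equiv> ore_conj \<sigma> \<delta>"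

abbreviation lin :: "'a \<Rightarrow> 'a poly" where "lin x \<equiv> [:- x, 1:]"

lemma s_add: "\<sigma> (a + b) = \<sigma> a + \<sigma> b" using endo unfolding ring_endo_def by blast
lemma s_mult: "\<sigma> (a * b) = \<sigma> a * \<sigma> b" using endo unfolding ring_endo_def by blast
lemma s_1[simp]: "\<sigma> 1 = 1" using endo unfolding ring_endo_def by blast
lemma d_add: "\<delta> (a + b) = \<delta> a + \<delta> b" using deriv unfolding sigma_derivation_def by blast
lemma d_mult: "\<delta> (a * b) = \<sigma> a * \<delta> b + \<delta> a * b" using deriv unfolding sigma_derivation_def by blast
lemma s_0[simp]: "\<sigma> 0 = 0" using s_add[of 0 0] by simp
lemma d_0[simp]: "\<delta> 0 = 0" using d_add[of 0 0] by simp
lemma d_1[simp]: "\<delta> 1 = 0" using d_mult[of 1 1] by simp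

lemma coeff_L: "coeff (L a q) n = a * coeff q n"
  unfolding ore_lscale_def by (simp add: coeff_map_poly)

lemma coeff_T: "coeff (T q) n = (case n of 0 \<Rightarrow> 0 | Suc m \<Rightarrow> \<sigma> (coeff q m)) + \<delta> (coeff q n)"
  unfolding ore_tmul_def by (simp add: coeff_map_poly coeff_pCons split: nat.split)

lemma T_add: "T (p + q) = T p + T q"
  by (rule poly_eqI) (auto simp: coeff_T s_add d_add split: nat.split)
lemma T_0[simp]: "T 0 = 0"
  by (rule poly_eqI) (auto simp: coeff_T split: nat.split)
lemma Tpow_add: "(T^^i) (p + q) = (T^^i) p + (T^^i) q"
  by (induction i) (auto simp: T_add)
lemma T_sum: "T (sum f S) = (\<Sum>i\<in>S. T (f i))"
  using sum_comp_morphism[of T f S] by (simp add: T_add o_def)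

lemma L_add: "L a (p + q) = L a p + L a q"
  by (rule poly_eqI) (simp add: coeff_L distrib_left)
lemma L_add_left: "L (a + b) p = L a p + L b p"
  by (rule poly_eqI) (simp add: coeff_L distrib_right)
lemma L_0[simp]: "L a 0 = 0" by (rule poly_eqI) (simp add: coeff_L)
lemma L_0_left[simp]: "L 0 p = 0" by (rule poly_eqI) (simp add: coeff_L)
lemma L_1[simp]: "L 1 p = p" by (rule poly_eqI) (simp add: coeff_L)
lemma L_L: "L a (L b p) = L (a * b) p" by (rule poly_eqI) (simp add: coeff_L mult.assoc)
lemma L_sum: "L a (sum f S) = (\<Sum>i\<in>S. L a (f i))"
  using sum_comp_morphism[of "L a" f S] by (simp add: L_add o_def)

text \<open>The commutation rule t a = sigma(a) t + delta(a), acting on a whole polynomial.\<close>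
lemma T_L: "T (L a r) = L (\<sigma> a) (T r) + L (\<delta> a) r"
  by (rule poly_eqI) (auto simp: coeff_T coeff_L s_mult d_mult distrib_left split: nat.split)

lemma mult_sum_upto:
  assumes "degree p \<le> N"
  shows "p \<star> q = (\<Sum>i\<le>N. L (coeff p i) ((T^^i) q))"
  unfolding ore_mult_def
  by (rule sum.mono_neutral_right[symmetric]) (use assms in \<open>auto simp: coeff_eq_0\<close>)

lemma coeff_mult: "coeff (r \<star> q) n = (\<Sum>i\<le>degree r. coeff r i * coeff ((T^^i) q) n)"
  unfolding ore_mult_def by (simp add: coeff_sum coeff_L)

lemma mult_const_left: "[:c:] \<star> p = L c p"
  unfolding ore_mult_def by simp

lemma mult_lin_left: "lin y \<star> p = L (- y) p + T p"
  unfolding ore_mult_def by (simp add: atMost_Suc)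

lemma mult_monom_left: "monom a k \<star> q = L a ((T^^k) q)"
proof -
  have "monom a k \<star> q = (\<Sum>i\<le>k. L (coeff (monom a k) i) ((T^^i) q))"
    by (rule mult_sum_upto) (simp add: degree_monom_le)
  also have "\<dots> = (\<Sum>i\<le>k. if i = k then L a ((T^^k) q) else 0)"
    by (rule sum.cong) (auto simp: coeff_monom)
  finally show ?thesis by simp
qed

subsection \<open>R is a ring\<close>

lemma mult_add_left: "(p1 + p2) \<star> q = p1 \<star> q + p2 \<star> q"
proof -
  let ?N = "max (degree p1) (degree p2)"
  have "degree (p1 + p2) \<le> ?N" by (meson degree_add_le max.cobounded1 max.cobounded2)
  thus ?thesis by (simp add: mult_sum_upto[of _ ?N] L_add_left sum.distrib)
qed

lemma mult_add_right: "p \<star> (q1 + q2) = p \<star> q1 + p \<star> q2"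
  unfolding ore_mult_def by (simp add: Tpow_add L_add sum.distrib)

lemma mult_0_left[simp]: "0 \<star> q = 0" unfolding ore_mult_def by simp

lemma mult_diff_left: "(p1 - p2) \<star> q = p1 \<star> q - p2 \<star> q"
  by (metis add_diff_cancel diff_add_cancel mult_add_left)
lemma mult_diff_right: "p \<star> (q1 - q2) = p \<star> q1 - p \<star> q2"
  by (metis add_diff_cancel diff_add_cancel mult_add_right)

lemma mult_sum_left: "sum f S \<star> q = (\<Sum>i\<in>S. f i \<star> q)"
  using sum_comp_morphism[of "\<lambda>p. p \<star> q" f S] by (simp add: mult_add_left o_def)

lemma mult_L_left: "L a p \<star> q = L a (p \<star> q)"
proof -
  have "degree (L a p) \<le> degree p" by (rule degree_le) (simp add: coeff_L coeff_eq_0)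
  hence "L a p \<star> q = (\<Sum>i\<le>degree p. L (coeff (L a p) i) ((T^^i) q))" by (rule mult_sum_upto)
  thus ?thesis by (simp add: ore_mult_def L_sum coeff_L L_L)
qed

lemma mult_T_left: "T p \<star> q = T (p \<star> q)"
proof -
  let ?N = "degree p"
  let ?shift = "\<Sum>i\<le>?N. L (\<sigma> (coeff p i)) ((T^^Suc i) q)"
  let ?diff = "\<Sum>i\<le>?N. L (\<delta> (coeff p i)) ((T^^i) q)"
  have "degree (T p) \<le> Suc ?N"
    by (rule degree_le) (auto simp: coeff_T coeff_eq_0 split: nat.split)
  hence "T p \<star> q = (\<Sum>i\<le>Suc ?N. L (case i of 0 \<Rightarrow> 0 | Suc m \<Rightarrow> \<sigma> (coeff p m)) ((T^^i) q))
                    + (\<Sum>i\<le>Suc ?N. L (\<delta> (coeff p i)) ((T^^i) q))"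
    by (simp add: mult_sum_upto coeff_T L_add_left sum.distrib)
  also have "(\<Sum>i\<le>Suc ?N. L (case i of 0 \<Rightarrow> 0 | Suc m \<Rightarrow> \<sigma> (coeff p m)) ((T^^i) q)) = ?shift"
    by (subst sum.atMost_Suc_shift) simp
  also have "(\<Sum>i\<le>Suc ?N. L (\<delta> (coeff p i)) ((T^^i) q)) = ?diff"
    by (simp add: coeff_eq_0)
  also have "?shift + ?diff = T (p \<star> q)"
    unfolding ore_mult_def by (simp add: T_sum T_L sum.distrib)
  finally show ?thesis .
qed

text \<open>Associativity: by bilinearity it reduces to the commutation of left scaling
  and left multiplication by t with right multiplication.\<close>
lemma mult_assoc: "(p \<star> q) \<star> r = p \<star> (q \<star> r)"
proof -
  have Tpow: "(T^^i) p' \<star> r = (T^^i) (p' \<star> r)" for i p'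
    by (induction i) (auto simp: mult_T_left)
  have "(p \<star> q) \<star> r = (\<Sum>i\<le>degree p. L (coeff p i) ((T^^i) q) \<star> r)"
    unfolding ore_mult_def[of _ _ p q] by (rule mult_sum_left)
  also have "\<dots> = p \<star> (q \<star> r)"
    unfolding ore_mult_def[of _ _ p "q \<star> r"] by (simp add: mult_L_left Tpow)
  finally show ?thesis .
qed

lemma Tpow_one: "coeff ((T^^i) [:1:]) n = (if n = i then 1 else 0)"
proof (induction i arbitrary: n)
  case 0
  then show ?case by (cases n) auto
next
  case (Suc i)
  then show ?case by (cases n) (auto simp: coeff_T)
qed

lemma mult_1_right[simp]: "p \<star> [:1:] = p"
proof (rule poly_eqI)
  fix n
  have "coeff (p \<star> [:1:]) n = (\<Sum>i\<le>degree p. if i = n then coeff p n else 0)"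
    unfolding coeff_mult by (rule sum.cong) (auto simp: Tpow_one)
  also have "\<dots> = coeff p n" by (auto simp: coeff_eq_0)
  finally show "coeff (p \<star> [:1:]) n = coeff p n" .
qed

lemma mult_1_left[simp]: "[:1:] \<star> p = p"
  by (simp add: mult_const_left)

lemma mult_const_const: "[:c:] \<star> [:d:] = [:c * d:]"
  unfolding mult_const_left by (rule poly_eqI) (simp add: coeff_L coeff_pCons split: nat.split)

lemma ideal_iff: "p \<in> LI f \<longleftrightarrow> (\<exists>r. p = r \<star> f)"
  unfolding left_ideal_def by auto

lemma ideal_add: "p \<in> LI f \<Longrightarrow> q \<in> LI f \<Longrightarrow> p + q \<in> LI f"
  unfolding ideal_iff by (metis mult_add_left)
lemma ideal_diff: "p \<in> LI f \<Longrightarrow> q \<in> LI f \<Longrightarrow> p - q \<in> LI f"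
  unfolding ideal_iff by (metis mult_diff_left)
lemma ideal_mult: "p \<in> LI f \<Longrightarrow> r \<star> p \<in> LI f"
  unfolding ideal_iff by (metis mult_assoc)
lemma ideal_self: "f \<in> LI f"
  unfolding ideal_iff by (metis mult_1_left)
lemma ideal_0: "0 \<in> LI f"
  unfolding ideal_iff by (metis mult_0_left)

lemma ideal_trans: "f \<in> LI k \<Longrightarrow> p \<in> LI f \<Longrightarrow> p \<in> LI k"
  unfolding ideal_iff by (metis mult_assoc)

lemma coset_eq_iff: "coset h1 (LI f) = coset h2 (LI f) \<longleftrightarrow> h1 - h2 \<in> LI f"
proof
  assume "coset h1 (LI f) = coset h2 (LI f)"
  moreover have "h1 \<in> coset h1 (LI f)" unfolding coset_def using ideal_0 by force
  ultimately obtain r where "h1 = h2 + r" "r \<in> LI f" unfolding coset_def by auto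
  thus "h1 - h2 \<in> LI f" by simp
next
  assume h: "h1 - h2 \<in> LI f"
  have "h1 + r = h2 + ((h1 - h2) + r)" "h2 + r = h1 + (r - (h1 - h2))" for r
    by simp_all
  with ideal_add[OF h] ideal_diff[OF _ h]
  show "coset h1 (LI f) = coset h2 (LI f)" unfolding coset_def by blast
qed

subsection \<open>The remainder theorem and right evaluation\<close>

lemma Tpow_lin: "coeff ((T^^i) (lin x)) (Suc i) = 1 \<and> (\<forall>j > Suc i. coeff ((T^^i) (lin x)) j = 0)"
proof (induction i)
  case 0
  then show ?case by (auto simp: coeff_pCons split: nat.split)
next
  case (Suc i)
  then show ?case by (auto simp: coeff_T split: nat.split)
qed

text \<open>A nonzero multiple of t - x has degree at least one, so it is never a constant.\<close>
lemma const_in_lin_ideal: assumes "[:c:] \<in> LI (lin x)" shows "c = 0"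
proof -
  obtain r where r: "[:c:] = r \<star> lin x" using assms unfolding ideal_iff by blast
  have "coeff (r \<star> lin x) (Suc (degree r)) = (\<Sum>i\<le>degree r. if i = degree r then lead_coeff r else 0)"
    unfolding coeff_mult using Tpow_lin by (intro sum.cong) auto
  hence "lead_coeff r = 0" by (simp flip: r)
  thus ?thesis using r by simp
qed

lemma remainder_exists: "\<exists>c. h - [:c:] \<in> LI (lin x)"
proof (induction "degree h" arbitrary: h rule: less_induct)
  case less
  show ?case
  proof (cases "degree h")
    case 0
    then have "h - [:coeff h 0:] \<in> LI (lin x)" using ideal_0 by (simp add: degree_0_id)
    thus ?thesis by blast
  next
    case (Suc k)
    define m where "m = monom (lead_coeff h) k \<star> lin x"
    have "degree (h - m) \<le> k"
    proof (rule degree_le, intro allI impI)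
      fix j assume "k < j"
      then show "coeff (h - m) j = 0"
        using Tpow_lin[of k x] coeff_eq_0[of h j] Suc
        by (cases "j = Suc k") (auto simp: m_def mult_monom_left coeff_L)
    qed
    then obtain c where "(h - m) - [:c:] \<in> LI (lin x)" using less Suc by force
    moreover have "m \<in> LI (lin x)" unfolding m_def ideal_iff by blast
    ultimately have "((h - m) - [:c:]) + m \<in> LI (lin x)" by (rule ideal_add)
    thus ?thesis by (auto simp: algebra_simps)
  qed
qed

lemma eval_eq_iff: "ev h x = c \<longleftrightarrow> h - [:c:] \<in> LI (lin x)"
proof -
  have unique: "c1 = c2" if "h - [:c1:] \<in> LI (lin x)" "h - [:c2:] \<in> LI (lin x)" for c1 c2
  proof -
    have "(h - [:c1:]) - (h - [:c2:]) \<in> LI (lin x)" by (rule ideal_diff[OF that])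
    hence "c2 - c1 = 0" by (intro const_in_lin_ideal) simp
    thus ?thesis by simp
  qed
  have "\<exists>!c. h - [:c:] \<in> LI (lin x)" using remainder_exists unique by blast
  hence "h - [:ev h x:] \<in> LI (lin x)" unfolding ore_eval_def by (rule theI')
  thus ?thesis using unique by blast
qed

lemma root_iff: "ev h x = 0 \<longleftrightarrow> h \<in> LI (lin x)"
  by (simp add: eval_eq_iff)

lemma ideal_at_root: "x \<in> right_roots \<sigma> \<delta> f \<Longrightarrow> p \<in> LI f \<Longrightarrow> p \<in> LI (lin x)"
  unfolding right_roots_def using ideal_trans root_iff by blast

subsection \<open>Conjugation and the product formula\<close>

lemma lin_conj_mult: assumes "c \<noteq> 0"
  shows "lin (conj x c) \<star> [:c:] = [:\<sigma> c:] \<star> lin x"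
proof -
  have e: "conj x c * c = \<sigma> c * x + \<delta> c"
    unfolding ore_conj_def using assms by (simp add: distrib_right mult.assoc)
  show ?thesis unfolding mult_lin_left mult_const_left
    by (rule poly_eqI) (auto simp: coeff_L coeff_T coeff_pCons e split: nat.split)
qed

lemma conj_conj: assumes "a \<noteq> 0" "b \<noteq> 0"
  shows "conj (conj x b) a = conj x (a * b)"
proof -
  have cancel: "b * (inverse b * z) = z" for z
    using assms(2) by (simp flip: mult.assoc)
  show ?thesis unfolding ore_conj_def using assms
    by (simp add: s_mult d_mult nonzero_inverse_mult_distrib distrib_left distrib_right
        mult.assoc cancel)
qed

lemma conj_1[simp]: "conj x 1 = x"
  unfolding ore_conj_def by simp

lemma eval_mult_root: "ev g x = 0 \<Longrightarrow> ev (h \<star> g) x = 0"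
  using ideal_mult root_iff by blast

lemma eval_mult:
  assumes gx: "ev g x = c" and c: "c \<noteq> 0"
  shows "ev (h \<star> g) x = ev h (conj x c) * c"
proof -
  define y where "y = conj x c"
  define d where "d = ev h y"
  obtain p where p: "h = p \<star> lin y + [:d:]"
    using eval_eq_iff[of h y d] unfolding d_def ideal_iff by (auto simp: algebra_simps)
  obtain s where s: "g = s \<star> lin x + [:c:]"
    using gx unfolding eval_eq_iff ideal_iff by (auto simp: algebra_simps)
  have "lin y \<star> g = (lin y \<star> s + [:\<sigma> c:]) \<star> lin x"
    unfolding y_def using lin_conj_mult[OF c, of x]
    by (subst s) (simp add: mult_add_right mult_add_left mult_assoc)
  hence lin_g: "lin y \<star> g \<in> LI (lin x)" unfolding ideal_iff by blast
  have "[:d:] \<star> g = ([:d:] \<star> s) \<star> lin x + [:d * c:]"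
    by (subst s) (simp add: mult_add_right mult_assoc mult_const_const)
  hence "h \<star> g - [:d * c:] = p \<star> (lin y \<star> g) + ([:d:] \<star> s) \<star> lin x"
    by (simp add: p mult_add_left mult_assoc)
  also have "\<dots> \<in> LI (lin x)"
    using ideal_mult[OF lin_g] ideal_mult[OF ideal_self] by (rule ideal_add)
  finally show ?thesis unfolding y_def d_def by (simp add: eval_eq_iff)
qed

end

locale ore_iso = ore +
  fixes f f' g :: "'a poly"
  assumes iso: "induced_iso \<sigma> \<delta> f f' g"
begin

lemma iso_wd: "h1 - h2 \<in> LI f' \<Longrightarrow> h1 \<star> g - h2 \<star> g \<in> LI f"
  and iso_inj: "h1 \<star> g - h2 \<star> g \<in> LI f \<Longrightarrow> h1 - h2 \<in> LI f'"
  and iso_surj: "\<exists>h. h \<star> g - k \<in> LI f"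
  using iso unfolding induced_iso_def coset_eq_iff by blast+

definition h0 :: "'a poly" where "h0 = (SOME h. h \<star> g - [:1:] \<in> LI f)"

lemma h0: "h0 \<star> g - [:1:] \<in> LI f"
  unfolding h0_def using iso_surj by (rule someI_ex)

text \<open>First claim: at a root x of f, (h0 g)(x) = 1, which is impossible if g(x) = 0.\<close>
lemma g_nonzero_at_roots:
  assumes x: "x \<in> right_roots \<sigma> \<delta> f"
  shows "ev g x \<noteq> 0"
proof
  assume "ev g x = 0"
  hence "ev (h0 \<star> g) x = 0" by (rule eval_mult_root)
  moreover have "ev (h0 \<star> g) x = 1"
    using ideal_at_root[OF x h0] by (simp add: eval_eq_iff)
  ultimately show False by simp
qed

text \<open>phi_g maps V(f) into V(f'), because f' g \<in> R f.\<close>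
lemma phi_maps_roots:
  assumes x: "x \<in> right_roots \<sigma> \<delta> f"
  shows "ore_phi \<sigma> \<delta> g x \<in> right_roots \<sigma> \<delta> f'"
proof -
  have "f' \<star> g - 0 \<star> g \<in> LI f" by (rule iso_wd) (simp add: ideal_self)
  hence "ev (f' \<star> g) x = 0" using ideal_at_root[OF x] root_iff by simp
  hence "ev f' (conj x (ev g x)) * ev g x = 0"
    using eval_mult[OF refl g_nonzero_at_roots[OF x]] by simp
  thus ?thesis using g_nonzero_at_roots[OF x] unfolding ore_phi_def right_roots_def by simp
qed

text \<open>Every root y of f' is the image under phi_g of the root y^c' of f, where c' = h0(y):
  injectivity gives g h0 = 1 and f h0 = 0 modulo R f'.\<close>
lemma roots_are_phi_images:
  assumes y: "y \<in> right_roots \<sigma> \<delta> f'"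
  shows "y \<in> ore_phi \<sigma> \<delta> g ` right_roots \<sigma> \<delta> f"
proof -
  have "(g \<star> h0) \<star> g - [:1:] \<star> g = g \<star> (h0 \<star> g - [:1:])"
    by (simp add: mult_assoc mult_diff_right)
  hence "g \<star> h0 - [:1:] \<in> LI f'" using iso_inj ideal_mult[OF h0] by metis
  hence gh0: "ev (g \<star> h0) y = 1" using ideal_at_root[OF y] by (simp add: eval_eq_iff)
  have "(f \<star> h0) \<star> g - 0 \<star> g = f \<star> (h0 \<star> g - [:1:]) + f"
    by (simp add: mult_assoc mult_diff_right)
  hence "f \<star> h0 \<in> LI f'"
    using iso_inj[of "f \<star> h0" 0] ideal_add[OF ideal_mult[OF h0] ideal_self] by simp
  hence fh0: "ev (f \<star> h0) y = 0" using ideal_at_root[OF y] root_iff by blast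
  define c' where "c' = ev h0 y"
  define x where "x = conj y c'"
  have c': "c' \<noteq> 0" using gh0 eval_mult_root[of h0 y g] unfolding c'_def by auto
  have "ev f x = 0" using fh0 c' eval_mult[OF c'_def[symmetric] c'] unfolding x_def by simp
  moreover have gx: "ev g x * c' = 1" using gh0 eval_mult[OF c'_def[symmetric] c'] x_def by simp
  moreover have "ore_phi \<sigma> \<delta> g x = y"
  proof -
    have "ev g x \<noteq> 0" using gx by auto
    thus ?thesis using gx c' conj_conj unfolding ore_phi_def x_def by simp
  qed
  ultimately show ?thesis unfolding right_roots_def by force
qed

end

theorem corollary1p17:
  fixes \<sigma> \<delta> :: "'a::division_ring \<Rightarrow> 'a" and f f' g :: "'a poly"
  assumes "ring_endo \<sigma>"
    and "sigma_derivation \<sigma> \<delta>"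
    and "induced_iso \<sigma> \<delta> f f' g"
  shows "(\<forall>x \<in> right_roots \<sigma> \<delta> f. ore_eval \<sigma> \<delta> g x \<noteq> 0) \<and>
         right_roots \<sigma> \<delta> f' = ore_phi \<sigma> \<delta> g ` right_roots \<sigma> \<delta> f"
proof -
  interpret ore_iso \<sigma> \<delta> f f' g using assms by unfold_locales
  show ?thesis
    using g_nonzero_at_roots phi_maps_roots roots_are_phi_images by blast
qed

end
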